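(* Let $b\in(0,1)$, $\phi\in(0,1)$ and $h_G>1$. Consider the set of solutions $(x,y)$ with $\tfrac12\le y\le x\le1$ of the system $$x=\frac{x^b(h_Gy+1-y)}{x^b(h_Gy+1-y)+(1-x)^b(y+h_G-h_Gy)},\qquad y=\phi x+\frac{1-\phi}{h_G+1}(h_Gy+1-y).$$ Let $\mathcal S=\{(\tfrac12,\tfrac12),\,(1,\frac{\phi h_G+1}{\phi h_G+2-\phi})\}$. If $0<b\le\frac{2}{\phi(h_G-1)+2}$, the solution set is $\mathcal S$; otherwise (i.e. $\frac{2}{\phi(h_G-1)+2}<b<1$) the solution set is $\mathcal S\cup\{(\hat x(\phi,h_G,b),\frac{\phi(h_G+1)\hat x(\phi,h_G,b)+1-\phi}{\phi h_G+2-\phi})\}$.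
   Context: For $0<b<1$ define $g(x,b)=\frac{x^{1-b}-(1-x)^{1-b}}{x(1-x)^{1-b}-(1-x)x^{1-b}}$ for $x\in(\tfrac12,1)$ and $g(\tfrac12,b)=\frac2b-2$. When $\frac{2}{\phi(h_G-1)+2}<b<1$, $\hat x(\phi,h_G,b)$ denotes the unique solution $x\in(\tfrac12,1)$ of $g(x,b)=\phi(h_G-1)$. *)

theory Defs
  imports Complex_Main
begin

definition g :: "real \<Rightarrow> real \<Rightarrow> real" where
  "g x b = (if x = 1/2 then 2/b - 2
            else (x powr (1-b) - (1-x) powr (1-b)) /
                 (x * (1-x) powr (1-b) - (1-x) * x powr (1-b)))"

text \<open>The unique solution x in the open interval (1/2,1) of g x b = phi (hG - 1),
  defined for 2/(phi (hG-1)+2) < b < 1.\<close>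
definition xhat :: "real \<Rightarrow> real \<Rightarrow> real \<Rightarrow> real" where
  "xhat phi hG b = (THE x. 1/2 < x \<and> x < 1 \<and> g x b = phi * (hG - 1))"

definition sol_set :: "real \<Rightarrow> real \<Rightarrow> real \<Rightarrow> (real \<times> real) set" where
  "sol_set b phi hG = {(x, y). 1/2 \<le> y \<and> y \<le> x \<and> x \<le> 1 \<and>
     x = x powr b * (hG * y + 1 - y) /
         (x powr b * (hG * y + 1 - y) + (1 - x) powr b * (y + hG - hG * y)) \<and>
     y = phi * x + (1 - phi) / (hG + 1) * (hG * y + 1 - y)}"

end

theory Submission
  imports Defs
begin

(* On the line y = y_sol x, which solves the second equation and lies in [1/2, x] iff x >= 1/2,
   the end points x = 1/2 and x = 1 always solve the first equation.  For 1/2 < x < 1 put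
   a = 1 - b, K = phi (hG - 1) and t = x / (1 - x) > 1: both the first equation and g x b = K
   become F a (1 + K) t = 0, where F a c t = t^a (t + c) - (1 + c t).  Now F a c 1 = 0, and F''
   changes sign only at t0 = c (1 - a) / (1 + a).  If F'(1) = 1 + a - c (1 - a) >= 0, i.e.
   b <= 2 / (K + 2), then F' > 0 and hence F > 0 on (1, oo).  Otherwise F' < 0 and F < 0 on
   (1, t0], while beyond t0 the function F is strictly convex and unbounded, so it has exactly
   one root t > 1; the corresponding x is xhat. *)

definition F :: "real \<Rightarrow> real \<Rightarrow> real \<Rightarrow> real" where
  "F a c t = t powr a * (t + c) - (1 + c * t)"

definition dF :: "real \<Rightarrow> real \<Rightarrow> real \<Rightarrow> real" where
  "dF a c t = (a + 1) * t powr a + a * c * t powr (a - 1) - c"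

definition ddF :: "real \<Rightarrow> real \<Rightarrow> real \<Rightarrow> real" where
  "ddF a c t = a * t powr (a - 2) * ((a + 1) * t - c * (1 - a))"

lemma powr_eq_mult_powr_diff_one: "0 < (t::real) \<Longrightarrow> t powr a = t * t powr (a - 1)"
  using powr_add[of t 1 "a - 1"] by simp

lemma has_real_derivative_F: "0 < t \<Longrightarrow> (F a c has_real_derivative dF a c t) (at t)"
  unfolding F_def[abs_def] dF_def
  by (auto intro!: derivative_eq_intros simp: powr_eq_mult_powr_diff_one[of t a] algebra_simps)

lemma has_real_derivative_dF: "0 < t \<Longrightarrow> (dF a c has_real_derivative ddF a c t) (at t)"
  unfolding dF_def[abs_def] ddF_def
  using powr_eq_mult_powr_diff_one[of t "a - 1"]
  by (auto intro!: derivative_eq_intros simp: algebra_simps)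

lemma F_at_1: "F a c 1 = 0"
  by (simp add: F_def)

lemma dF_at_1: "dF a c 1 = 1 + a - c * (1 - a)"
  by (simp add: dF_def algebra_simps)

lemma ddF_pos: "0 < a \<Longrightarrow> 0 < t \<Longrightarrow> c * (1 - a) < (a + 1) * t \<Longrightarrow> 0 < ddF a c t"
  by (simp add: ddF_def)

lemma ddF_neg: "0 < a \<Longrightarrow> 0 < t \<Longrightarrow> (a + 1) * t < c * (1 - a) \<Longrightarrow> ddF a c t < 0"
  by (simp add: ddF_def mult_pos_neg)

lemma continuous_on_F: "0 < l \<Longrightarrow> continuous_on {l..u} (F a c)"
  by (rule continuous_at_imp_continuous_on) (auto intro: DERIV_isCont[OF has_real_derivative_F])

lemma continuous_on_dF: "0 < l \<Longrightarrow> continuous_on {l..u} (dF a c)"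
  by (rule continuous_at_imp_continuous_on) (auto intro: DERIV_isCont[OF has_real_derivative_dF])

lemma F_pos_above_1:
  assumes a: "0 < a" and c: "c * (1 - a) \<le> 1 + a" and t: "1 < t"
  shows "0 < F a c t"
proof -
  have dF_pos: "0 < dF a c s" if s: "1 < s" for s
  proof -
    have "dF a c 1 < dF a c s"
    proof (rule DERIV_pos_imp_increasing_open[OF s])
      fix x assume x: "1 < x" "x < s"
      have "(a + 1) * 1 < (a + 1) * x"
        using a x by (intro mult_strict_left_mono) auto
      then have "c * (1 - a) < (a + 1) * x"
        using c by simp
      then show "\<exists>y. DERIV (dF a c) x :> y \<and> 0 < y"
        using x a by (intro exI[of _ "ddF a c x"]) (auto intro: has_real_derivative_dF ddF_pos)
    qed (simp add: continuous_on_dF)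
    then show ?thesis
      using c by (simp add: dF_at_1)
  qed
  have "F a c 1 < F a c t"
  proof (rule DERIV_pos_imp_increasing_open[OF t])
    fix x assume "1 < x" "x < t"
    then show "\<exists>y. DERIV (F a c) x :> y \<and> 0 < y"
      by (intro exI[of _ "dF a c x"]) (simp add: dF_pos has_real_derivative_F)
  qed (simp add: continuous_on_F)
  then show ?thesis
    by (simp add: F_at_1)
qed

context
  fixes a c t0 :: real
  assumes a: "0 < a" "a < 1" and c: "1 + a < c * (1 - a)"
  defines "t0 \<equiv> c * (1 - a) / (a + 1)"
begin

lemma one_less_t0: "1 < t0"
  using a c by (simp add: t0_def field_simps)

lemma dF_neg_below_t0:
  assumes s: "1 < s" "s \<le> t0"
  shows "dF a c s < 0"
proof -
  have "dF a c s < dF a c 1"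
  proof (rule DERIV_neg_imp_decreasing_open[OF s(1)])
    fix x assume x: "1 < x" "x < s"
    have "(a + 1) * x < (a + 1) * t0"
      using a x s by (intro mult_strict_left_mono) auto
    then have "(a + 1) * x < c * (1 - a)"
      using a by (simp add: t0_def)
    then show "\<exists>y. DERIV (dF a c) x :> y \<and> y < 0"
      using x a by (intro exI[of _ "ddF a c x"]) (auto intro: has_real_derivative_dF ddF_neg)
  qed (simp add: continuous_on_dF)
  then show ?thesis
    using c by (simp add: dF_at_1)
qed

lemma F_neg_below_t0:
  assumes s: "1 < s" "s \<le> t0"
  shows "F a c s < 0"
proof -
  have "F a c s < F a c 1"
  proof (rule DERIV_neg_imp_decreasing_open[OF s(1)])
    fix x assume "1 < x" "x < s"
    then show "\<exists>y. DERIV (F a c) x :> y \<and> y < 0"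
      using s by (intro exI[of _ "dF a c x"]) (simp add: dF_neg_below_t0 has_real_derivative_F)
  qed (simp add: continuous_on_F)
  then show ?thesis
    by (simp add: F_at_1)
qed

lemma dF_strict_mono_above_t0:
  assumes uv: "t0 \<le> u" "u < v"
  shows "dF a c u < dF a c v"
proof (rule DERIV_pos_imp_increasing_open[OF uv(2)])
  fix x assume x: "u < x" "x < v"
  have "(a + 1) * t0 < (a + 1) * x"
    using a x uv by (intro mult_strict_left_mono) auto
  then have "c * (1 - a) < (a + 1) * x"
    using a by (simp add: t0_def)
  then show "\<exists>y. DERIV (dF a c) x :> y \<and> 0 < y"
    using x a uv one_less_t0 by (intro exI[of _ "ddF a c x"]) (auto intro: has_real_derivative_dF ddF_pos)
qed (use uv one_less_t0 in \<open>simp add: continuous_on_dF\<close>)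

lemma F_root_exists: "\<exists>r. t0 < r \<and> F a c r = 0"
proof -
  define T where "T = (c + 1) powr (1 / a)"
  have "0 < c * (1 - a)"
    using a c by linarith
  then have c_pos: "0 < c"
    using a by (simp add: zero_less_mult_iff)
  have T_pow: "T powr a = c + 1"
    using a c_pos by (simp add: T_def powr_powr)
  have T_gt_1: "1 < T"
    using a c_pos by (simp add: T_def)
  have "F a c T = T - 1 + c * (c + 1)"
    by (simp add: F_def T_pow algebra_simps)
  moreover have "0 < c * (c + 1)"
    using c_pos by simp
  ultimately have F_T: "0 < F a c T"
    using T_gt_1 by linarith
  have t0_le_T: "t0 \<le> T"
    using F_neg_below_t0[of T] F_T T_gt_1 by force
  obtain r where r: "t0 \<le> r" "r \<le> T" "F a c r = 0"
    using IVT'[of "F a c" t0 0 T] F_neg_below_t0[of t0] one_less_t0 F_T t0_le_T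
      continuous_on_F[of t0 T a c] by auto
  moreover have "r \<noteq> t0"
    using r F_neg_below_t0[of t0] one_less_t0 by auto
  ultimately show ?thesis
    by (intro exI[of _ r]) simp
qed

lemma F_increasing_from_root:
  assumes r: "1 < r" "F a c r = 0" and s: "r < s"
  shows "F a c r < F a c s"
proof -
  have t0_less_r: "t0 < r"
    using F_neg_below_t0[of r] r by force
  obtain z where z: "t0 < z" "z < r" "F a c r - F a c t0 = (r - t0) * dF a c z"
    using MVT2[OF t0_less_r, of "F a c" "dF a c"] has_real_derivative_F one_less_t0 by force
  have "0 < (r - t0) * dF a c z"
    using z(3) r(2) F_neg_below_t0[of t0] one_less_t0 by simp
  then have "0 < dF a c z"
    using t0_less_r by (simp add: zero_less_mult_iff)
  show ?thesis
  proof (rule DERIV_pos_imp_increasing_open[OF s])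
    fix x assume x: "r < x" "x < s"
    have "dF a c z < dF a c x"
      using dF_strict_mono_above_t0[of z x] z x by simp
    then show "\<exists>y. DERIV (F a c) x :> y \<and> 0 < y"
      using \<open>0 < dF a c z\<close> x r by (intro exI[of _ "dF a c x"]) (simp add: has_real_derivative_F)
  qed (use r in \<open>simp add: continuous_on_F\<close>)
qed

lemma ex1_F_root_above_1: "\<exists>!t. 1 < t \<and> F a c t = 0"
proof -
  obtain r where r: "t0 < r" "F a c r = 0"
    using F_root_exists by blast
  have "s = r" if s: "1 < s" "F a c s = 0" for s
    using F_increasing_from_root[of s r] F_increasing_from_root[of r s] s r one_less_t0
    by (cases s r rule: linorder_cases) auto
  then show ?thesis
    using r one_less_t0 by (intro ex1I[of _ r]) auto
qed

end

lemma F_odds: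
  assumes "x < 1"
  shows "(1 - x) * F a (1 + K) (x / (1 - x)) = (x / (1 - x)) powr a * (1 + K * (1 - x)) - (1 + K * x)"
proof -
  have "(1 - x) * (x / (1 - x) + (1 + K)) = 1 + K * (1 - x)"
       "(1 - x) * (1 + (1 + K) * (x / (1 - x))) = 1 + K * x"
    using assms by (simp_all add: field_simps)
  then show ?thesis
    by (simp add: F_def right_diff_distrib mult.left_commute)
qed

lemma F_odds_eq_0_iff:
  "x < 1 \<Longrightarrow> F a (1 + K) (x / (1 - x)) = 0 \<longleftrightarrow> (x / (1 - x)) powr a * (1 + K * (1 - x)) = 1 + K * x"
  using F_odds[of x a K] by auto

lemma g_eq_iff_F_odds_root:
  assumes x: "1/2 < x" "x < 1" and b: "0 < b" "b < 1"
  shows "g x b = K \<longleftrightarrow> F (1 - b) (1 + K) (x / (1 - x)) = 0"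
proof -
  define t where "t = x / (1 - x)"
  define u where "u = 1 - x"
  have t: "1 < t" and u: "0 < u" and x_eq: "x = t * u"
    using x by (simp_all add: t_def u_def field_simps)
  have "t powr (1 - b) < t powr 1"
    using t b by (intro powr_less_mono) auto
  then have gap: "0 < t - t powr (1 - b)"
    using t by simp
  have x_powr: "x powr (1 - b) = t powr (1 - b) * u powr (1 - b)"
    using t u by (simp add: x_eq powr_mult)
  have "g x b = (x powr (1 - b) - u powr (1 - b)) / (x * u powr (1 - b) - u * x powr (1 - b))"
    using x by (simp add: g_def u_def)
  also have "\<dots> = (u powr (1 - b) * (t powr (1 - b) - 1)) / (u powr (1 - b) * (u * (t - t powr (1 - b))))"
    unfolding x_powr by (simp add: x_eq algebra_simps)
  also have "\<dots> = (t powr (1 - b) - 1) / (u * (t - t powr (1 - b)))"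
    using u by simp
  also have "\<dots> = K \<longleftrightarrow> t powr (1 - b) * (1 + K * u) = 1 + K * x"
    using u gap by (simp add: field_simps x_eq)
  also have "\<dots> \<longleftrightarrow> F (1 - b) (1 + K) t = 0"
    using F_odds_eq_0_iff[of x "1 - b" K] x by (simp add: t_def u_def)
  finally show ?thesis
    by (simp add: t_def)
qed

lemma fixed_point_eq_iff_odds:
  fixes x b A B :: real
  assumes x: "0 < x" "x < 1" and AB: "0 < A" "0 < B"
  shows "x = x powr b * A / (x powr b * A + (1 - x) powr b * B) \<longleftrightarrow>
         (x / (1 - x)) powr (1 - b) * B = A"
proof -
  define t where "t = x / (1 - x)"
  define u where "u = 1 - x"
  have t: "0 < t" and u: "0 < u" and x_eq: "x = t * u" and u_eq: "u = 1 - t * u"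
    using x by (simp_all add: t_def u_def field_simps)
  have x_powr: "x powr b = t powr b * u powr b"
    using t u by (simp add: x_eq powr_mult)
  have t_powr: "t = t powr b * t powr (1 - b)"
    using t by (simp add: powr_add[symmetric])
  have den: "0 < x powr b * A + u powr b * B"
    using x u AB by (simp add: add_pos_pos)
  have "x = x powr b * A / (x powr b * A + u powr b * B) \<longleftrightarrow>
        u powr b * (t * u * B) = u powr b * (t powr b * A * (1 - t * u))"
    using den unfolding x_powr by (simp add: field_simps x_eq)
  also have "\<dots> \<longleftrightarrow> t * B = t powr b * A"
    unfolding u_eq[symmetric] using u by (simp add: ac_simps)
  also have "\<dots> \<longleftrightarrow> t powr (1 - b) * B = A"
    using t by (subst t_powr) simp
  finally show ?thesis
    by (simp only: t_def u_def)
qed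

definition y_sol :: "real \<Rightarrow> real \<Rightarrow> real \<Rightarrow> real" where
  "y_sol phi hG x = (phi * (hG + 1) * x + 1 - phi) / (phi * hG + 2 - phi)"

lemma second_eq_iff_y_sol:
  fixes phi hG x y :: real
  assumes "hG + 1 \<noteq> 0" "phi * hG + 2 - phi \<noteq> 0"
  shows "y = phi * x + (1 - phi) / (hG + 1) * (hG * y + 1 - y) \<longleftrightarrow> y = y_sol phi hG x"
proof -
  have "y = phi * x + (1 - phi) / (hG + 1) * (hG * y + 1 - y) \<longleftrightarrow>
        (phi * hG + 2 - phi) * y = phi * (hG + 1) * x + 1 - phi"
    using assms by (simp add: field_simps)
  then show ?thesis
    using assms by (simp add: y_sol_def field_simps)
qed

lemma nonneg_mult_divide_iff: "0 < (c::'a::linordered_field) \<Longrightarrow> 0 < d \<Longrightarrow> 0 \<le> c * z / d \<longleftrightarrow> 0 \<le> z"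
  by (simp add: pos_le_divide_eq zero_le_mult_iff)

context
  fixes phi hG :: real
  assumes phi: "0 < phi" "phi < 1" and hG: "1 < hG"
begin

lemma y_sol_denom_pos: "0 < phi * hG + 2 - phi"
proof -
  have "0 < phi * (hG - 1)"
    using phi hG by simp
  then show ?thesis
    by (simp add: algebra_simps)
qed

lemma half_le_y_sol_iff: "1/2 \<le> y_sol phi hG x \<longleftrightarrow> 1/2 \<le> x"
proof -
  have "y_sol phi hG x - 1/2 = phi * (hG + 1) * (x - 1/2) / (phi * hG + 2 - phi)"
    using y_sol_denom_pos by (simp add: y_sol_def field_simps)
  moreover have "0 < phi * (hG + 1)"
    using phi hG by simp
  ultimately show ?thesis
    using nonneg_mult_divide_iff[OF _ y_sol_denom_pos, of "phi * (hG + 1)" "x - 1/2"] by auto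
qed

lemma y_sol_le_iff: "y_sol phi hG x \<le> x \<longleftrightarrow> 1/2 \<le> x"
proof -
  have "x - y_sol phi hG x = 2 * (1 - phi) * (x - 1/2) / (phi * hG + 2 - phi)"
    using y_sol_denom_pos by (simp add: y_sol_def field_simps)
  then show ?thesis
    using nonneg_mult_divide_iff[OF _ y_sol_denom_pos, of "2 * (1 - phi)" "x - 1/2"] phi by auto
qed

lemma y_sol_half: "y_sol phi hG (1/2) = 1/2"
  using y_sol_denom_pos by (simp add: y_sol_def field_simps)

lemma y_sol_weights:
  defines "K \<equiv> phi * (hG - 1)"
  shows "(K + 2) * (hG * y_sol phi hG x + 1 - y_sol phi hG x) = (hG + 1) * (1 + K * x)"
    and "(K + 2) * (y_sol phi hG x + hG - hG * y_sol phi hG x) = (hG + 1) * (1 + K * (1 - x))"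
proof -
  have K_D: "K + 2 = phi * hG + 2 - phi"
    by (simp add: K_def algebra_simps)
  have D_y: "(phi * hG + 2 - phi) * y_sol phi hG x = phi * (hG + 1) * x + 1 - phi"
    using y_sol_denom_pos by (simp add: y_sol_def)
  have "(K + 2) * (hG * y_sol phi hG x + 1 - y_sol phi hG x)
        = (K + 2) + (hG - 1) * ((phi * hG + 2 - phi) * y_sol phi hG x)"
    "(K + 2) * (y_sol phi hG x + hG - hG * y_sol phi hG x)
        = (K + 2) * hG - (hG - 1) * ((phi * hG + 2 - phi) * y_sol phi hG x)"
    unfolding K_D by (simp_all add: algebra_simps)
  then show "(K + 2) * (hG * y_sol phi hG x + 1 - y_sol phi hG x) = (hG + 1) * (1 + K * x)"
    and "(K + 2) * (y_sol phi hG x + hG - hG * y_sol phi hG x) = (hG + 1) * (1 + K * (1 - x))"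
    unfolding D_y by (simp_all add: K_def algebra_simps)
qed

lemma first_eq_at_y_sol_iff:
  assumes x: "0 < x" "x < 1" and y: "y = y_sol phi hG x"
  shows "x = x powr b * (hG * y + 1 - y) /
             (x powr b * (hG * y + 1 - y) + (1 - x) powr b * (y + hG - hG * y)) \<longleftrightarrow>
         F (1 - b) (1 + phi * (hG - 1)) (x / (1 - x)) = 0"
proof -
  define K where "K = phi * (hG - 1)"
  have K: "0 < K"
    using phi hG by (simp add: K_def)
  have A: "(K + 2) * (hG * y + 1 - y) = (hG + 1) * (1 + K * x)"
   and B: "(K + 2) * (y + hG - hG * y) = (hG + 1) * (1 + K * (1 - x))"
    using y_sol_weights[of x] by (simp_all add: y K_def)
  have "0 < (K + 2) * (hG * y + 1 - y)" "0 < (K + 2) * (y + hG - hG * y)"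
    unfolding A B using hG K x by (simp_all add: add_pos_pos)
  then have A_pos: "0 < hG * y + 1 - y" and B_pos: "0 < y + hG - hG * y"
    using K by (simp_all add: zero_less_mult_iff)
  have "x = x powr b * (hG * y + 1 - y) /
            (x powr b * (hG * y + 1 - y) + (1 - x) powr b * (y + hG - hG * y)) \<longleftrightarrow>
        (x / (1 - x)) powr (1 - b) * (y + hG - hG * y) = hG * y + 1 - y"
    using x A_pos B_pos by (rule fixed_point_eq_iff_odds)
  also have "\<dots> \<longleftrightarrow> (K + 2) * ((x / (1 - x)) powr (1 - b) * (y + hG - hG * y)) = (K + 2) * (hG * y + 1 - y)"
    using K by simp
  also have "\<dots> \<longleftrightarrow> (hG + 1) * ((x / (1 - x)) powr (1 - b) * (1 + K * (1 - x))) = (hG + 1) * (1 + K * x)"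
    using A B by (simp add: mult.left_commute[of "K + 2"] mult.left_commute[of "hG + 1"])
  also have "\<dots> \<longleftrightarrow> (x / (1 - x)) powr (1 - b) * (1 + K * (1 - x)) = 1 + K * x"
    using hG by simp
  also have "\<dots> \<longleftrightarrow> F (1 - b) (1 + K) (x / (1 - x)) = 0"
    using x by (simp add: F_odds_eq_0_iff)
  finally show ?thesis
    by (simp add: K_def)
qed

lemma sol_set_eq:
  assumes b: "0 < b" "b < 1"
  shows "sol_set b phi hG = (\<lambda>x. (x, y_sol phi hG x)) `
           ({1/2, 1} \<union> {x. 1/2 < x \<and> x < 1 \<and> g x b = phi * (hG - 1)})"
proof -
  define E where "E x y \<longleftrightarrow> x = x powr b * (hG * y + 1 - y) /
      (x powr b * (hG * y + 1 - y) + (1 - x) powr b * (y + hG - hG * y))" for x y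
  have E_half: "E (1/2) (1/2)"
  proof -
    have "0 < (1/2) powr b * (hG * (1/2) + 1 - 1/2)"
      using hG by simp
    then show ?thesis
      by (simp add: E_def field_simps)
  qed
  have E_one: "E 1 y" if "0 \<le> y" for y
  proof -
    have "0 \<le> (hG - 1) * y"
      using hG that by simp
    then have "0 < hG * y + 1 - y"
      by (simp add: algebra_simps)
    then show ?thesis
      by (simp add: E_def)
  qed
  have E_mid: "E x (y_sol phi hG x) \<longleftrightarrow> g x b = phi * (hG - 1)" if "1/2 < x" "x < 1" for x
    using first_eq_at_y_sol_iff[of x] g_eq_iff_F_odds_root[of x b] that b by (simp add: E_def)
  have on_curve: "(x, y) \<in> sol_set b phi hG \<longleftrightarrow>
        y = y_sol phi hG x \<and> 1/2 \<le> x \<and> x \<le> 1 \<and> E x (y_sol phi hG x)" for x y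
    using second_eq_iff_y_sol y_sol_denom_pos half_le_y_sol_iff y_sol_le_iff hG
    unfolding sol_set_def E_def by auto
  have on_curve_E: "1/2 \<le> x \<and> x \<le> 1 \<and> E x (y_sol phi hG x) \<longleftrightarrow>
        x = 1/2 \<or> x = 1 \<or> (1/2 < x \<and> x < 1 \<and> g x b = phi * (hG - 1))" for x
  proof -
    consider "x = 1/2" | "x = 1" | "1/2 < x \<and> x < 1" | "\<not> (1/2 \<le> x \<and> x \<le> 1)"
      by fastforce
    then show ?thesis
    proof cases
      case 1
      then show ?thesis
        unfolding 1 y_sol_half using E_half by simp
    next
      case 2
      then show ?thesis
        using E_one half_le_y_sol_iff[of 1] by simp
    next
      case 3
      then show ?thesis
        using E_mid[of x] by auto
    qed auto
  qed
  have "(x, y) \<in> sol_set b phi hG \<longleftrightarrow> (x, y) \<in> (\<lambda>x. (x, y_sol phi hG x)) `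
           ({1/2, 1} \<union> {x. 1/2 < x \<and> x < 1 \<and> g x b = phi * (hG - 1)})" for x y
    unfolding on_curve on_curve_E by blast
  then show ?thesis
    by (simp add: set_eq_iff)
qed

end

lemma y_sol_one: "y_sol phi hG 1 = (phi * hG + 1) / (phi * hG + 2 - phi)"
  by (simp add: y_sol_def algebra_simps)

lemma g_ne_below_threshold:
  assumes K: "0 < K" and b: "0 < b" "b \<le> 2 / (K + 2)" and x: "1/2 < x" "x < 1"
  shows "g x b \<noteq> K"
proof -
  have "b * (K + 2) \<le> 2"
    using b K by (simp add: field_simps)
  moreover have "0 < K * b"
    using K b by simp
  ultimately have b_lt_1: "b < 1" and "(1 + K) * (1 - (1 - b)) \<le> 1 + (1 - b)"
    by (simp_all add: algebra_simps)
  moreover have "1 < x / (1 - x)"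
    using x by (simp add: field_simps)
  ultimately have "0 < F (1 - b) (1 + K) (x / (1 - x))"
    using b by (intro F_pos_above_1) auto
  then show ?thesis
    using g_eq_iff_F_odds_root[OF x b(1) b_lt_1] by simp
qed

lemma ex1_g_root_above_threshold:
  assumes K: "0 < K" and b: "2 / (K + 2) < b" "b < 1"
  shows "\<exists>!x. 1/2 < x \<and> x < 1 \<and> g x b = K"
proof -
  have "2 < b * (K + 2)"
    using b K by (simp add: field_simps)
  then have "1 + (1 - b) < (1 + K) * (1 - (1 - b))"
    by (simp add: algebra_simps)
  moreover have b_pos: "0 < b"
    using b K divide_pos_pos[of 2 "K + 2"] by linarith
  ultimately have "\<exists>!t. 1 < t \<and> F (1 - b) (1 + K) t = 0"
    using b by (intro ex1_F_root_above_1) auto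
  then obtain t where t: "1 < t" "F (1 - b) (1 + K) t = 0"
    and t_unique: "\<And>s. 1 < s \<Longrightarrow> F (1 - b) (1 + K) s = 0 \<Longrightarrow> s = t"
    by (elim ex1E) blast
  have root_iff: "g x b = K \<longleftrightarrow> x / (1 - x) = t" if x: "1/2 < x" "x < 1" for x
  proof -
    have "1 < x / (1 - x)"
      using x by (simp add: field_simps)
    then show ?thesis
      using g_eq_iff_F_odds_root[OF x b_pos b(2)] t t_unique by metis
  qed
  show ?thesis
  proof (rule ex1I[of _ "t / (1 + t)"])
    have "1/2 < t / (1 + t)" "t / (1 + t) < 1" "t / (1 + t) / (1 - t / (1 + t)) = t"
      using t by (simp_all add: field_simps)
    then show "1/2 < t / (1 + t) \<and> t / (1 + t) < 1 \<and> g (t / (1 + t)) b = K"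
      using root_iff by simp
  next
    fix x assume "1/2 < x \<and> x < 1 \<and> g x b = K"
    then show "x = t / (1 + t)"
      using root_iff[of x] t by (auto simp: field_simps)
  qed
qed

lemma g_root_iff_xhat:
  assumes "0 < phi" "1 < hG" "2 / (phi * (hG - 1) + 2) < b" "b < 1"
  shows "1/2 < x \<and> x < 1 \<and> g x b = phi * (hG - 1) \<longleftrightarrow> x = xhat phi hG b"
proof -
  have ex1: "\<exists>!x. 1/2 < x \<and> x < 1 \<and> g x b = phi * (hG - 1)"
    using assms by (intro ex1_g_root_above_threshold) auto
  then have "1/2 < xhat phi hG b \<and> xhat phi hG b < 1 \<and> g (xhat phi hG b) b = phi * (hG - 1)"
    unfolding xhat_def by (rule theI')
  with ex1 show ?thesis
    unfolding xhat_def by (blast intro: the1_equality[symmetric])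
qed

theorem lemmaB3:
  fixes b phi hG :: real
  assumes "0 < b" "b < 1" "0 < phi" "phi < 1" "1 < hG"
  shows "(b \<le> 2 / (phi * (hG - 1) + 2) \<longrightarrow>
            sol_set b phi hG = {(1/2, 1/2), (1, (phi * hG + 1) / (phi * hG + 2 - phi))})
       \<and> (2 / (phi * (hG - 1) + 2) < b \<longrightarrow>
            sol_set b phi hG = {(1/2, 1/2), (1, (phi * hG + 1) / (phi * hG + 2 - phi)),
              (xhat phi hG b,
               (phi * (hG + 1) * xhat phi hG b + 1 - phi) / (phi * hG + 2 - phi))})"
proof -
  have K: "0 < phi * (hG - 1)"
    using assms by simp
  have sol: "sol_set b phi hG = (\<lambda>x. (x, y_sol phi hG x)) `
      ({1/2, 1} \<union> {x. 1/2 < x \<and> x < 1 \<and> g x b = phi * (hG - 1)})"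
    using assms by (intro sol_set_eq) auto
  have ends: "y_sol phi hG (1/2) = 1/2" "y_sol phi hG 1 = (phi * hG + 1) / (phi * hG + 2 - phi)"
    using assms by (simp_all add: y_sol_half y_sol_one)
  show ?thesis
  proof (intro conjI impI)
    assume "b \<le> 2 / (phi * (hG - 1) + 2)"
    then have no_root: "{x. 1/2 < x \<and> x < 1 \<and> g x b = phi * (hG - 1)} = {}"
      using g_ne_below_threshold[OF K \<open>0 < b\<close>] by blast
    show "sol_set b phi hG = {(1/2, 1/2), (1, (phi * hG + 1) / (phi * hG + 2 - phi))}"
      unfolding sol no_root by (simp add: ends)
  next
    assume "2 / (phi * (hG - 1) + 2) < b"
    then have one_root: "{x. 1/2 < x \<and> x < 1 \<and> g x b = phi * (hG - 1)} = {xhat phi hG b}"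
      using g_root_iff_xhat assms by blast
    show "sol_set b phi hG = {(1/2, 1/2), (1, (phi * hG + 1) / (phi * hG + 2 - phi)),
        (xhat phi hG b, (phi * (hG + 1) * xhat phi hG b + 1 - phi) / (phi * hG + 2 - phi))}"
      unfolding sol one_root y_sol_def[symmetric] by (auto simp: ends)
  qed
qed

end
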